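(* A fuzzy Archimedean Riesz space has the fuzzy countable sup property if and only if every fuzzy $\sigma$-ideal in it is a fuzzy band.
   Context: A fuzzy order on a real vector space $E$ is a map $\mu:E\times E\to[0,1]$ with $\mu(x,x)=1$; $\mu(x,y)+\mu(y,x)>1$ implies $x=y$; and $\mu(x,z)\ge\sup_{y}\min(\mu(x,y),\mu(y,z))$. Write $x\le y$ for $\mu(x,y)>\frac12$; upper bounds, suprema and infima are taken with respect to this relation. $(E,\mu)$ is a fuzzy ordered linear space if $\mu(x_1,x_2)>\frac12$ implies $\mu(x_1,x_2)\le\mu(x_1+x,x_2+x)$ for all $x$ and $\mu(x_1,x_2)\le\mu(\alpha x_1,\alpha x_2)$ for all $\alpha>0$; it is a fuzzy Riesz space if $x\vee y=\sup\{x,y\}$, $x\wedge y=\inf\{x,y\}$ exist for all $x,y$. $|x|=x\vee(-x)$. A fuzzy Riesz space is fuzzy Archimedean if for every nonzero $x$ with $0\le x$ the set $\{\lambda x:\lambda>0\}$ is not bounded above. It has the fuzzy countable sup property if whenever $\sup A$ exists for a subset $A$, there is an at most countable $B\subseteq A$ with $\sup B=\sup A$. A fuzzy ideal is a vector subspace $A$ such that $\mu(|x|,|y|)>\frac12$ and $y\in A$ imply $x\in A$; it is a fuzzy $\sigma$-ideal if $0\le x_n\in A$, $x_n\uparrow x$ (increasing with supremum $x$) imply $x\in A$; it is a fuzzy band if it contains the supremum of each of its subsets whose supremum exists in the space. *)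

theory Defs
  imports "HOL-Analysis.Analysis"
begin

text \<open>The transitivity condition mu(x,z) >= sup_y min(mu(x,y),mu(y,z)) is written
  pointwise in y (equivalent to the sup form since the values are bounded).\<close>
definition fuzzy_order :: "('a \<Rightarrow> 'a \<Rightarrow> real) \<Rightarrow> bool" where
  "fuzzy_order \<mu> \<longleftrightarrow>
     (\<forall>x y. 0 \<le> \<mu> x y \<and> \<mu> x y \<le> 1) \<and>
     (\<forall>x. \<mu> x x = 1) \<and>
     (\<forall>x y. \<mu> x y + \<mu> y x > 1 \<longrightarrow> x = y) \<and>
     (\<forall>x y z. \<mu> x z \<ge> min (\<mu> x y) (\<mu> y z))"

definition fle :: "('a \<Rightarrow> 'a \<Rightarrow> real) \<Rightarrow> 'a \<Rightarrow> 'a \<Rightarrow> bool" where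
  "fle \<mu> x y \<longleftrightarrow> \<mu> x y > 1/2"

definition fub :: "('a \<Rightarrow> 'a \<Rightarrow> real) \<Rightarrow> 'a set \<Rightarrow> 'a \<Rightarrow> bool" where
  "fub \<mu> A u \<longleftrightarrow> (\<forall>a\<in>A. fle \<mu> a u)"

definition flb :: "('a \<Rightarrow> 'a \<Rightarrow> real) \<Rightarrow> 'a set \<Rightarrow> 'a \<Rightarrow> bool" where
  "flb \<mu> A l \<longleftrightarrow> (\<forall>a\<in>A. fle \<mu> l a)"

definition is_fsup :: "('a \<Rightarrow> 'a \<Rightarrow> real) \<Rightarrow> 'a set \<Rightarrow> 'a \<Rightarrow> bool" where
  "is_fsup \<mu> A s \<longleftrightarrow> fub \<mu> A s \<and> (\<forall>u. fub \<mu> A u \<longrightarrow> fle \<mu> s u)"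

definition is_finf :: "('a \<Rightarrow> 'a \<Rightarrow> real) \<Rightarrow> 'a set \<Rightarrow> 'a \<Rightarrow> bool" where
  "is_finf \<mu> A i \<longleftrightarrow> flb \<mu> A i \<and> (\<forall>l. flb \<mu> A l \<longrightarrow> fle \<mu> l i)"

definition fsup :: "('a \<Rightarrow> 'a \<Rightarrow> real) \<Rightarrow> 'a set \<Rightarrow> 'a" where
  "fsup \<mu> A = (THE s. is_fsup \<mu> A s)"

definition fuzzy_ordered_linear_space :: "('a::real_vector \<Rightarrow> 'a \<Rightarrow> real) \<Rightarrow> bool" where
  "fuzzy_ordered_linear_space \<mu> \<longleftrightarrow> fuzzy_order \<mu> \<and>
     (\<forall>x1 x2. \<mu> x1 x2 > 1/2 \<longrightarrow>
        (\<forall>x. \<mu> x1 x2 \<le> \<mu> (x1 + x) (x2 + x)) \<and>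
        (\<forall>\<alpha>::real. \<alpha> > 0 \<longrightarrow> \<mu> x1 x2 \<le> \<mu> (\<alpha> *\<^sub>R x1) (\<alpha> *\<^sub>R x2)))"

definition fuzzy_riesz_space :: "('a::real_vector \<Rightarrow> 'a \<Rightarrow> real) \<Rightarrow> bool" where
  "fuzzy_riesz_space \<mu> \<longleftrightarrow> fuzzy_ordered_linear_space \<mu> \<and>
     (\<forall>x y. (\<exists>s. is_fsup \<mu> {x, y} s) \<and> (\<exists>i. is_finf \<mu> {x, y} i))"

definition fabs :: "('a::real_vector \<Rightarrow> 'a \<Rightarrow> real) \<Rightarrow> 'a \<Rightarrow> 'a" where
  "fabs \<mu> x = fsup \<mu> {x, -x}"

definition fuzzy_archimedean :: "('a::real_vector \<Rightarrow> 'a \<Rightarrow> real) \<Rightarrow> bool" where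
  "fuzzy_archimedean \<mu> \<longleftrightarrow>
     (\<forall>x. x \<noteq> 0 \<and> fle \<mu> 0 x \<longrightarrow> \<not> (\<exists>u. fub \<mu> {c *\<^sub>R x | c::real. c > 0} u))"

definition fuzzy_countable_sup :: "('a \<Rightarrow> 'a \<Rightarrow> real) \<Rightarrow> bool" where
  "fuzzy_countable_sup \<mu> \<longleftrightarrow>
     (\<forall>A s. is_fsup \<mu> A s \<longrightarrow> (\<exists>B \<subseteq> A. countable B \<and> is_fsup \<mu> B s))"

definition fuzzy_ideal :: "('a::real_vector \<Rightarrow> 'a \<Rightarrow> real) \<Rightarrow> 'a set \<Rightarrow> bool" where
  "fuzzy_ideal \<mu> A \<longleftrightarrow> subspace A \<and>
     (\<forall>x y. fle \<mu> (fabs \<mu> x) (fabs \<mu> y) \<and> y \<in> A \<longrightarrow> x \<in> A)"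

definition fuzzy_sigma_ideal :: "('a::real_vector \<Rightarrow> 'a \<Rightarrow> real) \<Rightarrow> 'a set \<Rightarrow> bool" where
  "fuzzy_sigma_ideal \<mu> A \<longleftrightarrow> fuzzy_ideal \<mu> A \<and>
     (\<forall>(xs::nat \<Rightarrow> 'a) x. (\<forall>n. fle \<mu> 0 (xs n) \<and> xs n \<in> A) \<and>
        (\<forall>n. fle \<mu> (xs n) (xs (Suc n))) \<and> is_fsup \<mu> (range xs) x \<longrightarrow> x \<in> A)"

definition fuzzy_band :: "('a::real_vector \<Rightarrow> 'a \<Rightarrow> real) \<Rightarrow> 'a set \<Rightarrow> bool" where
  "fuzzy_band \<mu> A \<longleftrightarrow> fuzzy_ideal \<mu> A \<and>
     (\<forall>B s. B \<subseteq> A \<and> is_fsup \<mu> B s \<longrightarrow> s \<in> A)"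

end

theory Submission
  imports Defs "HOL-Library.Lattice_Algebras"
begin

(* Every sigma-ideal contains the supremum of each countable subset having one: the partial
   joins c_0 v ... v c_n form an increasing sequence with the same supremum, and after
   subtracting c_0 it is positive.  So the countable sup property makes sigma-ideals bands.

   Conversely (as in Luxemburg and Zaanen) it suffices that every order bounded system E of
   pairwise disjoint nonzero positive elements is countable.  The elements whose modulus meets
   only countably many members of E form a sigma-ideal containing E; if it is a band it contains
   the supremum of its part below a bound u of E, which by the Archimedean property is u
   itself, and u meets every member of E.  Given s = sup A and a0 in A, put u = s - a0 and
   r = u/(n+1).  A maximal disjoint system of nonzero elements below some (a - s + r)^+ is
   countable, and picking such an a for each member yields a countable C_n in A all of whose
   upper bounds w >= a0 satisfy s - w <= r.  The union of the C_n then has supremum s, again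
   by the Archimedean property. *)

lemma maximal_pairwise_subset:
  assumes "symp R"
  obtains M where "M \<subseteq> P" "pairwise R M" "\<And>x. x \<in> P \<Longrightarrow> (\<And>y. y \<in> M \<Longrightarrow> R x y) \<Longrightarrow> x \<in> M"
proof -
  let ?F = "{M. M \<subseteq> P \<and> pairwise R M}"
  have "\<exists>M\<in>?F. \<forall>X\<in>?F. M \<subseteq> X \<longrightarrow> X = M"
  proof (rule Zorn_Lemma, intro ballI)
    fix C
    assume "C \<in> chains ?F"
    then have C: "C \<subseteq> ?F" "chain\<^sub>\<subseteq> C"
      unfolding chains_def by auto
    have "pairwise R (\<Union>C)"
      by (rule pairwise_chain_Union[OF _ C(2)]) (use C(1) in blast)
    then show "\<Union>C \<in> ?F"
      using C(1) by blast
  qed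
  then obtain M where M: "M \<in> ?F" and max: "\<forall>X\<in>?F. M \<subseteq> X \<longrightarrow> X = M" ..
  show thesis
  proof (rule that)
    show "M \<subseteq> P" "pairwise R M"
      using M by simp_all
    fix x
    assume x: "x \<in> P" "\<And>y. y \<in> M \<Longrightarrow> R x y"
    then have "insert x M \<in> ?F"
      using M assms by (auto simp: pairwise_insert symp_def)
    then have "insert x M = M"
      using max by blast
    then show "x \<in> M"
      by blast
  qed
qed

locale fuzzy_riesz =
  fixes \<mu> :: "'a::real_vector \<Rightarrow> 'a \<Rightarrow> real"
  assumes riesz: "fuzzy_riesz_space \<mu>"
begin

abbreviation fuzzy_le :: "'a \<Rightarrow> 'a \<Rightarrow> bool" (infix "\<preceq>" 50) where
  "x \<preceq> y \<equiv> fle \<mu> x y"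

abbreviation fuzzy_less :: "'a \<Rightarrow> 'a \<Rightarrow> bool" where
  "fuzzy_less x y \<equiv> x \<preceq> y \<and> x \<noteq> y"

definition join :: "'a \<Rightarrow> 'a \<Rightarrow> 'a" where
  "join x y = fsup \<mu> {x, y}"

definition meet :: "'a \<Rightarrow> 'a \<Rightarrow> 'a" where
  "meet x y = (THE i. is_finf \<mu> {x, y} i)"

lemma fuzzy_order: "fuzzy_order \<mu>"
  using riesz unfolding fuzzy_riesz_space_def fuzzy_ordered_linear_space_def by blast

lemma fle_refl: "x \<preceq> x"
  using fuzzy_order unfolding fuzzy_order_def fle_def by simp

lemma fle_antisym: "x \<preceq> y \<Longrightarrow> y \<preceq> x \<Longrightarrow> x = y"
  using fuzzy_order unfolding fuzzy_order_def fle_def by force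

lemma fle_trans: "x \<preceq> y \<Longrightarrow> y \<preceq> z \<Longrightarrow> x \<preceq> z"
  using fuzzy_order unfolding fuzzy_order_def fle_def by (smt (verit))

lemma fle_add_right: "x \<preceq> y \<Longrightarrow> x + z \<preceq> y + z"
  using riesz unfolding fuzzy_riesz_space_def fuzzy_ordered_linear_space_def fle_def
  by (smt (verit))

lemma fle_scaleR: "x \<preceq> y \<Longrightarrow> 0 < c \<Longrightarrow> c *\<^sub>R x \<preceq> c *\<^sub>R y"
  using riesz unfolding fuzzy_riesz_space_def fuzzy_ordered_linear_space_def fle_def
  by (smt (verit))

lemma is_fsup_unique: "is_fsup \<mu> A s \<Longrightarrow> is_fsup \<mu> A t \<Longrightarrow> s = t"
  unfolding is_fsup_def by (blast intro: fle_antisym)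

lemma fsup_eq: "is_fsup \<mu> A s \<Longrightarrow> fsup \<mu> A = s"
  unfolding fsup_def using is_fsup_unique by blast

lemma is_fsup_join: "is_fsup \<mu> {x, y} (join x y)"
  using riesz fsup_eq unfolding fuzzy_riesz_space_def join_def by metis

lemma is_finf_meet: "is_finf \<mu> {x, y} (meet x y)"
proof -
  obtain i where i: "is_finf \<mu> {x, y} i"
    using riesz unfolding fuzzy_riesz_space_def by blast
  moreover have "j = i" if "is_finf \<mu> {x, y} j" for j
    using i that unfolding is_finf_def by (blast intro: fle_antisym)
  ultimately show ?thesis
    unfolding meet_def by (rule theI)
qed

sublocale F: ordered_real_vector "(+)" 0 "(-)" uminus "(\<preceq>)" fuzzy_less scaleR
proof unfold_locales
  show "c + a \<preceq> c + b" if "a \<preceq> b" for a b c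
    using fle_add_right[OF that, of c] by (simp only: add.commute)
  show "a *\<^sub>R x \<preceq> a *\<^sub>R y" if "x \<preceq> y" "0 \<le> a" for x y a
    using that fle_scaleR by (cases "a = 0") (auto simp: fle_refl)
  show "a *\<^sub>R x \<preceq> b *\<^sub>R x" if "a \<le> b" "0 \<preceq> x" for a b x
  proof (cases "a = b")
    case False
    then have "0 \<preceq> (b - a) *\<^sub>R x"
      using fle_scaleR[OF that(2), of "b - a"] that(1) by simp
    then show ?thesis
      using fle_add_right[of 0 "(b - a) *\<^sub>R x" "a *\<^sub>R x"] by (simp add: algebra_simps)
  qed (simp add: fle_refl)
qed (auto intro: fle_refl fle_trans fle_antisym)

sublocale F: lattice_ab_group_add_abs "fabs \<mu>" "(+)" 0 "(-)" uminus "(\<preceq>)" fuzzy_less meet join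
proof unfold_locales
  show "meet x y \<preceq> x" "meet x y \<preceq> y" "x \<preceq> join x y" "y \<preceq> join x y" for x y
    using is_finf_meet[of x y] is_fsup_join[of x y]
    unfolding is_finf_def flb_def is_fsup_def fub_def by auto
  show "x \<preceq> meet y z" if "x \<preceq> y" "x \<preceq> z" for x y z
    using is_finf_meet[of y z] that unfolding is_finf_def flb_def by auto
  show "join y z \<preceq> x" if "y \<preceq> x" "z \<preceq> x" for x y z
    using is_fsup_join[of y z] that unfolding is_fsup_def fub_def by auto
  show "fabs \<mu> a = join a (- a)" for a
    by (simp add: fabs_def join_def)
qed

(* Otherwise x - meet y z is rewritten into a join, which blocks the order reasoning below. *)
declare F.diff_inf_eq_sup [simp del] F.diff_sup_eq_inf [simp del]

lemma is_fsupI: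
  "(\<And>a. a \<in> A \<Longrightarrow> a \<preceq> s) \<Longrightarrow> (\<And>u. (\<And>a. a \<in> A \<Longrightarrow> a \<preceq> u) \<Longrightarrow> s \<preceq> u) \<Longrightarrow> is_fsup \<mu> A s"
  unfolding is_fsup_def fub_def by blast

lemma is_fsup_upper: "is_fsup \<mu> A s \<Longrightarrow> a \<in> A \<Longrightarrow> a \<preceq> s"
  unfolding is_fsup_def fub_def by blast

lemma is_fsup_least: "is_fsup \<mu> A s \<Longrightarrow> (\<And>a. a \<in> A \<Longrightarrow> a \<preceq> u) \<Longrightarrow> s \<preceq> u"
  unfolding is_fsup_def fub_def by blast

lemma is_fsup_empty: "is_fsup \<mu> {} s \<Longrightarrow> s = 0"
proof -
  assume "is_fsup \<mu> {} s"
  then have "s \<preceq> 0" and "s + 0 \<preceq> s + s"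
    using is_fsup_least[of "{}" s 0] is_fsup_least[of "{}" s "s + s"] by auto
  then show "s = 0"
    by (meson F.add_le_cancel_left F.order_antisym)
qed

lemma is_fsup_translate: "is_fsup \<mu> A s \<Longrightarrow> is_fsup \<mu> ((\<lambda>x. x + z) ` A) (s + z)"
proof (rule is_fsupI)
  assume s: "is_fsup \<mu> A s"
  show "b \<preceq> s + z" if "b \<in> (\<lambda>x. x + z) ` A" for b
    using that is_fsup_upper[OF s] by auto
  show "s + z \<preceq> u" if ub: "\<And>b. b \<in> (\<lambda>x. x + z) ` A \<Longrightarrow> b \<preceq> u" for u
  proof -
    have "a \<preceq> u - z" if "a \<in> A" for a
      using ub[of "a + z"] that by (simp add: F.le_diff_eq)
    then have "s \<preceq> u - z"
      by (rule is_fsup_least[OF s])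
    then show ?thesis
      by (simp add: F.le_diff_eq)
  qed
qed

lemma meet_add_nonneg_le: "0 \<preceq> p \<Longrightarrow> meet (p + q) e \<preceq> p + meet q e"
  unfolding F.add_inf_distrib_left by (simp add: F.inf_mono F.add_increasing)

lemma scaleR_nonneg: "0 \<le> c \<Longrightarrow> 0 \<preceq> x \<Longrightarrow> 0 \<preceq> c *\<^sub>R x"
  using F.scaleR_left_mono[of 0 x c] by simp

lemma disjoint_mono: "0 \<preceq> x \<Longrightarrow> 0 \<preceq> e \<Longrightarrow> x \<preceq> y \<Longrightarrow> meet y e = 0 \<Longrightarrow> meet x e = 0"
  by (metis F.inf_mono F.inf.cobounded2 F.le_inf_iff F.order_antisym F.order_refl)

lemma disjoint_add:
  assumes "0 \<preceq> x" "0 \<preceq> y" "0 \<preceq> e" "meet x e = 0" "meet y e = 0"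
  shows "meet (x + y) e = 0"
proof (rule F.order_antisym)
  have "meet (x + y) e \<preceq> x"
    using meet_add_nonneg_le[OF assms(1), of y e] assms(5) by simp
  then show "meet (x + y) e \<preceq> 0"
    using assms(4) by (metis F.inf.cobounded2 F.le_inf_iff)
  show "0 \<preceq> meet (x + y) e"
    using assms(1-3) by (simp add: F.add_nonneg_nonneg)
qed

lemma disjoint_scaleR:
  assumes x: "0 \<preceq> x" and e: "0 \<preceq> e" and xe: "meet x e = 0" and c: "0 \<le> c"
  shows "meet (c *\<^sub>R x) e = 0"
proof -
  have nat: "meet (real n *\<^sub>R x) e = 0" for n
  proof (induction n)
    case (Suc n)
    then show ?case
      using disjoint_add[OF scaleR_nonneg[OF _ x] x e Suc xe]
      by (simp add: algebra_simps)
  qed (simp add: F.inf_absorb1 e)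
  have "c *\<^sub>R x \<preceq> real (nat \<lceil>c\<rceil>) *\<^sub>R x"
    by (rule F.scaleR_right_mono[OF _ x]) linarith
  then show ?thesis
    using disjoint_mono[OF scaleR_nonneg[OF c x] e] nat by blast
qed

lemma meet_pprt_neg: "meet (F.pprt p) (F.pprt (- p)) = 0"
proof -
  have "F.pprt p = p - F.nprt p"
    by (metis F.prts add_diff_cancel)
  then have "meet (F.pprt p) (F.pprt (- p)) = meet (p - F.nprt p) (0 - F.nprt p)"
    by (simp add: F.pprt_neg)
  also have "\<dots> = F.nprt p - F.nprt p"
    unfolding diff_conv_add_uminus F.add_inf_distrib_right[symmetric] F.nprt_def ..
  finally show ?thesis
    by simp
qed

lemma add_le_if_disjoint: "meet x y = 0 \<Longrightarrow> x \<preceq> c \<Longrightarrow> y \<preceq> c \<Longrightarrow> x + y \<preceq> c"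
  using F.add_eq_inf_sup[of x y] by simp

lemma fabs_scaleR_le: "fabs \<mu> (c *\<^sub>R x) \<preceq> \<bar>c\<bar> *\<^sub>R fabs \<mu> x"
proof (cases "0 \<le> c")
  case True
  then show ?thesis
    using F.scaleR_left_mono[OF F.abs_ge_self True] F.scaleR_left_mono[OF F.abs_ge_minus_self True]
    by (intro F.abs_leI) auto
next
  case False
  then have c: "0 \<le> - c" by simp
  have "(- c) *\<^sub>R (- x) \<preceq> (- c) *\<^sub>R fabs \<mu> x" "(- c) *\<^sub>R x \<preceq> (- c) *\<^sub>R fabs \<mu> x"
    using F.scaleR_left_mono[OF F.abs_ge_minus_self c] F.scaleR_left_mono[OF F.abs_ge_self c] by auto
  then show ?thesis
    using False by (intro F.abs_leI) auto
qed

lemma is_fsup_disjoint: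
  assumes s: "is_fsup \<mu> X x" and "0 \<preceq> x" "0 \<preceq> e" and disj: "\<And>y. y \<in> X \<Longrightarrow> meet y e = 0"
  shows "meet x e = 0"
proof -
  have "y \<preceq> x - meet x e" if "y \<in> X" for y
  proof -
    have "0 \<preceq> x - y"
      using is_fsup_upper[OF s that] by simp
    from meet_add_nonneg_le[OF this, of y e] have "meet x e \<preceq> x - y"
      using disj[OF that] by simp
    then show ?thesis
      by (simp only: F.le_diff_eq add.commute)
  qed
  then have "x \<preceq> x - meet x e"
    by (rule is_fsup_least[OF s])
  then have "meet x e \<preceq> 0"
    by (simp only: F.le_diff_eq F.add_le_same_cancel1)
  then show ?thesis
    using assms(2,3) by (simp add: F.order_antisym)
qed

lemma fuzzy_ideal_subspace: "fuzzy_ideal \<mu> A \<Longrightarrow> subspace A"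
  unfolding fuzzy_ideal_def by blast

lemma fuzzy_ideal_solid: "fuzzy_ideal \<mu> A \<Longrightarrow> y \<in> A \<Longrightarrow> fabs \<mu> x \<preceq> fabs \<mu> y \<Longrightarrow> x \<in> A"
  unfolding fuzzy_ideal_def by blast

lemma fuzzy_ideal_fabs: "fuzzy_ideal \<mu> A \<Longrightarrow> x \<in> A \<Longrightarrow> fabs \<mu> x \<in> A"
  by (erule fuzzy_ideal_solid) (auto intro: F.order_refl)

lemma fuzzy_ideal_join:
  assumes A: "fuzzy_ideal \<mu> A" and "x \<in> A" "y \<in> A"
  shows "join x y \<in> A"
proof -
  let ?t = "fabs \<mu> x + fabs \<mu> y"
  have "?t \<in> A"
    using assms by (simp add: fuzzy_ideal_fabs subspace_add[OF fuzzy_ideal_subspace[OF A]])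
  moreover have "x \<preceq> ?t" "y \<preceq> ?t" "- x \<preceq> ?t"
    using F.add_increasing2[OF F.abs_ge_zero F.abs_ge_self] F.add_increasing[OF F.abs_ge_zero F.abs_ge_self]
      F.add_increasing2[OF F.abs_ge_zero F.abs_ge_minus_self] by blast+
  then have "fabs \<mu> (join x y) \<preceq> fabs \<mu> ?t"
    by (intro F.abs_leI) (auto intro: F.order_trans[OF F.inf_le1])
  ultimately show ?thesis
    by (rule fuzzy_ideal_solid[OF A])
qed

primrec partial_join :: "(nat \<Rightarrow> 'a) \<Rightarrow> nat \<Rightarrow> 'a" where
  "partial_join c 0 = c 0"
| "partial_join c (Suc n) = join (partial_join c n) (c (Suc n))"

lemma le_partial_join: "c n \<preceq> partial_join c n"
  by (cases n) simp_all

lemma is_fsup_partial_join: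
  assumes s: "is_fsup \<mu> (range c) s"
  shows "is_fsup \<mu> (range (partial_join c)) s"
proof (rule is_fsupI)
  have "partial_join c n \<preceq> s" for n
    by (induction n) (simp_all add: is_fsup_upper[OF s])
  then show "a \<preceq> s" if "a \<in> range (partial_join c)" for a
    using that by blast
  show "s \<preceq> u" if "\<And>a. a \<in> range (partial_join c) \<Longrightarrow> a \<preceq> u" for u
  proof (rule is_fsup_least[OF s])
    fix a
    assume "a \<in> range c"
    then obtain n where "a = c n" by blast
    then show "a \<preceq> u"
      using F.order_trans[OF le_partial_join that[OF rangeI]] by simp
  qed
qed

lemma fuzzy_ideal_partial_join: "fuzzy_ideal \<mu> A \<Longrightarrow> range c \<subseteq> A \<Longrightarrow> partial_join c n \<in> A"
  by (induction n) (simp_all add: fuzzy_ideal_join range_subsetD)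

lemma fuzzy_bandD: "fuzzy_band \<mu> A \<Longrightarrow> B \<subseteq> A \<Longrightarrow> is_fsup \<mu> B s \<Longrightarrow> s \<in> A"
  unfolding fuzzy_band_def by blast

lemma fuzzy_sigma_idealD:
  assumes "fuzzy_sigma_ideal \<mu> A" "\<And>n. 0 \<preceq> xs n" "range xs \<subseteq> A" "\<And>n. xs n \<preceq> xs (Suc n)"
    and "is_fsup \<mu> (range xs) x"
  shows "x \<in> A"
  using assms unfolding fuzzy_sigma_ideal_def by blast

lemma fuzzy_sigma_ideal_fsup_incseq:
  assumes A: "fuzzy_sigma_ideal \<mu> A" and y: "range y \<subseteq> A" and inc: "\<And>n. y n \<preceq> y (Suc n)"
    and s: "is_fsup \<mu> (range y) s"
  shows "s \<in> A"
proof -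
  have sub: "subspace A"
    using A unfolding fuzzy_sigma_ideal_def by (blast intro: fuzzy_ideal_subspace)
  have "s - y 0 \<in> A"
  proof (rule fuzzy_sigma_idealD[OF A])
    have "y 0 \<preceq> y n" for n
      by (induction n) (simp_all add: F.order_trans[OF _ inc])
    then show "0 \<preceq> y n - y 0" for n
      by simp
    show "range (\<lambda>n. y n - y 0) \<subseteq> A"
      using y by (auto intro: subspace_diff[OF sub])
    show "y n - y 0 \<preceq> y (Suc n) - y 0" for n
      using inc by (simp add: F.diff_right_mono)
    have "range (\<lambda>n. y n - y 0) = (\<lambda>x. x + - y 0) ` range y"
      by auto
    then show "is_fsup \<mu> (range (\<lambda>n. y n - y 0)) (s - y 0)"
      using is_fsup_translate[OF s, of "- y 0"] by simp
  qed
  then show ?thesis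
    using subspace_add[OF sub _ y[THEN range_subsetD, of 0]] by fastforce
qed

lemma fuzzy_sigma_ideal_countable_fsup:
  assumes A: "fuzzy_sigma_ideal \<mu> A" and "C \<subseteq> A" "countable C" and s: "is_fsup \<mu> C s"
  shows "s \<in> A"
proof (cases "C = {}")
  case True
  then show ?thesis
    using s is_fsup_empty A
    unfolding fuzzy_sigma_ideal_def by (auto dest: fuzzy_ideal_subspace subspace_0)
next
  case False
  define c where "c = from_nat_into C"
  have C: "C = range c"
    unfolding c_def using False assms(3) by simp
  show ?thesis
  proof (rule fuzzy_sigma_ideal_fsup_incseq[OF A])
    show "range (partial_join c) \<subseteq> A"
      using A assms(2) fuzzy_ideal_partial_join[of A c]
      unfolding C fuzzy_sigma_ideal_def by blast
    show "is_fsup \<mu> (range (partial_join c)) s"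
      using s unfolding C by (rule is_fsup_partial_join)
  qed simp
qed

theorem fuzzy_band_if_countable_sup:
  assumes csp: "fuzzy_countable_sup \<mu>" and A: "fuzzy_sigma_ideal \<mu> A"
  shows "fuzzy_band \<mu> A"
  unfolding fuzzy_band_def
proof (intro conjI allI impI)
  show "fuzzy_ideal \<mu> A"
    using A unfolding fuzzy_sigma_ideal_def by blast
  fix B s
  assume B: "B \<subseteq> A \<and> is_fsup \<mu> B s"
  with csp obtain C where "C \<subseteq> B" "countable C" "is_fsup \<mu> C s"
    unfolding fuzzy_countable_sup_def by meson
  with B show "s \<in> A"
    by (meson fuzzy_sigma_ideal_countable_fsup[OF A] subset_trans)
qed

definition meets_countably :: "'a set \<Rightarrow> 'a set" where
  "meets_countably E = {x. countable {e \<in> E. meet (fabs \<mu> x) e \<noteq> 0}}"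

lemma meets_countably_dominated:
  assumes E: "\<And>e. e \<in> E \<Longrightarrow> 0 \<preceq> e" and y: "y \<in> meets_countably E"
    and dom: "fabs \<mu> x \<preceq> c *\<^sub>R fabs \<mu> y" and c: "0 \<le> c"
  shows "x \<in> meets_countably E"
proof -
  have "meet (fabs \<mu> x) e = 0" if "e \<in> E" "meet (fabs \<mu> y) e = 0" for e
    using disjoint_mono[OF F.abs_ge_zero E[OF that(1)] dom
        disjoint_scaleR[OF F.abs_ge_zero E[OF that(1)] that(2) c]] .
  then have "{e \<in> E. meet (fabs \<mu> x) e \<noteq> 0} \<subseteq> {e \<in> E. meet (fabs \<mu> y) e \<noteq> 0}"
    by blast
  with y show ?thesis
    unfolding meets_countably_def by (simp add: countable_subset)
qed

lemma meets_countably_add: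
  assumes E: "\<And>e. e \<in> E \<Longrightarrow> 0 \<preceq> e" and "x \<in> meets_countably E" "y \<in> meets_countably E"
  shows "x + y \<in> meets_countably E"
proof -
  have "meet (fabs \<mu> (x + y)) e = 0"
    if "e \<in> E" "meet (fabs \<mu> x) e = 0" "meet (fabs \<mu> y) e = 0" for e
    using disjoint_mono[OF F.abs_ge_zero E[OF that(1)] F.abs_triangle_ineq
        disjoint_add[OF F.abs_ge_zero F.abs_ge_zero E[OF that(1)] that(2,3)]] .
  then have "{e \<in> E. meet (fabs \<mu> (x + y)) e \<noteq> 0}
    \<subseteq> {e \<in> E. meet (fabs \<mu> x) e \<noteq> 0} \<union> {e \<in> E. meet (fabs \<mu> y) e \<noteq> 0}"
    by blast
  with assms(2,3) show ?thesis
    unfolding meets_countably_def by (simp add: countable_subset)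
qed

lemma meets_countably_fsup:
  fixes xs :: "nat \<Rightarrow> 'a"
  assumes E: "\<And>e. e \<in> E \<Longrightarrow> 0 \<preceq> e" and xs: "range xs \<subseteq> meets_countably E" "\<And>n. 0 \<preceq> xs n"
    and s: "is_fsup \<mu> (range xs) x"
  shows "x \<in> meets_countably E"
proof -
  have x: "0 \<preceq> x"
    using F.order_trans[OF xs(2) is_fsup_upper[OF s rangeI]] .
  have "countable {e \<in> E. meet (fabs \<mu> (xs n)) e \<noteq> 0}" for n
    using xs(1) unfolding meets_countably_def by blast
  then have countable_union: "countable (\<Union>n. {e \<in> E. meet (fabs \<mu> (xs n)) e \<noteq> 0})"
    by simp
  have "{e \<in> E. meet (fabs \<mu> x) e \<noteq> 0} \<subseteq> (\<Union>n. {e \<in> E. meet (fabs \<mu> (xs n)) e \<noteq> 0})"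
  proof
    fix e
    assume e: "e \<in> {e \<in> E. meet (fabs \<mu> x) e \<noteq> 0}"
    show "e \<in> (\<Union>n. {e \<in> E. meet (fabs \<mu> (xs n)) e \<noteq> 0})"
    proof (rule ccontr)
      assume "e \<notin> (\<Union>n. {e \<in> E. meet (fabs \<mu> (xs n)) e \<noteq> 0})"
      then have "meet (xs n) e = 0" for n
        using e F.abs_of_nonneg[OF xs(2)] by auto
      then have "meet x e = 0"
        using e by (intro is_fsup_disjoint[OF s x E]) auto
      then show False
        using e x by (simp add: F.abs_of_nonneg)
    qed
  qed
  from countable_subset[OF this countable_union] show ?thesis
    unfolding meets_countably_def by simp
qed

lemma fuzzy_sigma_ideal_meets_countably:
  assumes E: "\<And>e. e \<in> E \<Longrightarrow> 0 \<preceq> e"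
  shows "fuzzy_sigma_ideal \<mu> (meets_countably E)"
  unfolding fuzzy_sigma_ideal_def fuzzy_ideal_def
proof (intro conjI allI impI)
  show "subspace (meets_countably E)"
    unfolding subspace_def
  proof (intro conjI ballI allI)
    have "{e \<in> E. meet 0 e \<noteq> 0} = {}"
      using E F.inf_absorb1 by blast
    then show "0 \<in> meets_countably E"
      unfolding meets_countably_def by (simp only: F.abs_zero mem_Collect_eq countable_empty)
    show "x + y \<in> meets_countably E" if "x \<in> meets_countably E" "y \<in> meets_countably E" for x y
      by (rule meets_countably_add[OF E that])
    show "c *\<^sub>R x \<in> meets_countably E" if "x \<in> meets_countably E" for c x
      by (rule meets_countably_dominated[OF E that fabs_scaleR_le abs_ge_zero])
  qed
  show "x \<in> meets_countably E" if "fabs \<mu> x \<preceq> fabs \<mu> y \<and> y \<in> meets_countably E" for x y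
    using meets_countably_dominated[OF E conjunct2[OF that], where c = 1] that by simp
  show "x \<in> meets_countably E"
    if "(\<forall>n. 0 \<preceq> xs n \<and> xs n \<in> meets_countably E) \<and> (\<forall>n. xs n \<preceq> xs (Suc n))
      \<and> is_fsup \<mu> (range xs) x" for xs x
    using that by (intro meets_countably_fsup[OF E]) auto
qed

lemma pairwise_disjoint_meets_countably:
  assumes disj: "pairwise (\<lambda>e e'. meet e e' = 0) E" and e: "e \<in> E" "0 \<preceq> e"
  shows "e \<in> meets_countably E"
proof -
  have "{e' \<in> E. meet (fabs \<mu> e) e' \<noteq> 0} \<subseteq> {e}"
  proof
    fix e'
    assume "e' \<in> {e' \<in> E. meet (fabs \<mu> e) e' \<noteq> 0}"
    then have "e' \<in> E" "meet e e' \<noteq> 0"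
      using F.abs_of_nonneg[OF e(2)] by simp_all
    then show "e' \<in> {e}"
      using pairwiseD[OF disj e(1)] by auto
  qed
  from countable_subset[OF this] show ?thesis
    unfolding meets_countably_def by simp
qed

lemma disjoint_pprt_if_le_neg:
  assumes "x \<preceq> - p" "0 \<preceq> e" "e \<preceq> F.pprt p"
  shows "meet (F.pprt x) e = 0"
proof (rule F.order_antisym)
  have "meet (F.pprt x) e \<preceq> meet (F.pprt (- p)) (F.pprt p)"
    using assms by (intro F.inf_mono) simp_all
  then show "meet (F.pprt x) e \<preceq> 0"
    by (simp only: F.inf_commute[of "F.pprt (- p)"] meet_pprt_neg)
  show "0 \<preceq> meet (F.pprt x) e"
    using assms(2) by simp
qed

lemma pprt_shift_le:
  assumes "is_fsup \<mu> A s" "a \<in> A" "0 \<preceq> r"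
  shows "F.pprt (a - s + r) \<preceq> r"
proof -
  have "a - s + r \<preceq> r"
    using is_fsup_upper[OF assms(1,2)] by simp
  then show ?thesis
    using assms(3) unfolding F.pprt_def by simp
qed

lemma eq_0_if_disjoint_from_pprts:
  assumes s: "is_fsup \<mu> A s" and h: "0 \<preceq> h" "h \<preceq> r"
    and disj: "\<And>a. a \<in> A \<Longrightarrow> meet (F.pprt (a - s + r)) h = 0"
  shows "h = 0"
proof -
  have r: "0 \<preceq> r"
    using h by (rule F.order_trans)
  have "a \<preceq> s - h" if a: "a \<in> A" for a
  proof -
    have "a - s + r \<preceq> F.pprt (a - s + r)"
      unfolding F.pprt_def by simp
    also have "F.pprt (a - s + r) \<preceq> r - h"
      using add_le_if_disjoint[OF disj[OF a] pprt_shift_le[OF s a r] h(2)]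
      by (simp only: F.le_diff_eq)
    finally have "a - s + r + (h - r + s) \<preceq> r - h + (h - r + s)"
      by (rule F.add_right_mono)
    then show ?thesis
      by (simp add: F.le_diff_eq)
  qed
  then have "s \<preceq> s - h"
    by (rule is_fsup_least[OF s])
  then have "h \<preceq> 0"
    by (simp only: F.le_diff_eq F.add_le_same_cancel1)
  then show "h = 0"
    using h(1) by (rule F.order_antisym)
qed

lemma maximal_disjoint_gap:
  assumes s: "is_fsup \<mu> A s" and r: "0 \<preceq> r"
    and E_nonneg: "\<And>e. e \<in> E \<Longrightarrow> 0 \<preceq> e"
    and E_max: "\<And>x a. 0 \<preceq> x \<Longrightarrow> x \<noteq> 0 \<Longrightarrow> a \<in> A \<Longrightarrow> x \<preceq> F.pprt (a - s + r)
      \<Longrightarrow> (\<And>e. e \<in> E \<Longrightarrow> meet x e = 0) \<Longrightarrow> x \<in> E"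
    and E_below: "\<And>e. e \<in> E \<Longrightarrow> \<exists>a. a \<preceq> w \<and> e \<preceq> F.pprt (a - s + r)"
  shows "meet (F.pprt (s - w - r)) r = 0"
proof -
  let ?f = "F.pprt (s - w - r)"
  have f_disj: "meet ?f e = 0" if e: "e \<in> E" for e
  proof -
    obtain a where a: "a \<preceq> w" "e \<preceq> F.pprt (a - s + r)"
      using E_below[OF e] by blast
    have "s - w - r \<preceq> s - a - r"
      by (rule F.diff_right_mono[OF F.diff_left_mono[OF a(1)]])
    then have "s - w - r \<preceq> - (a - s + r)"
      by (simp add: algebra_simps)
    then show ?thesis
      by (rule disjoint_pprt_if_le_neg[OF _ E_nonneg[OF e] a(2)])
  qed
  have f_q: "meet ?f (F.pprt (a - s + r)) = 0" if a: "a \<in> A" for a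
  proof (rule ccontr)
    let ?e = "meet ?f (F.pprt (a - s + r))"
    assume ne: "?e \<noteq> 0"
    have "meet ?e e = 0" if "e \<in> E" for e
      by (rule disjoint_mono[OF _ E_nonneg[OF that] F.inf_le1 f_disj[OF that]]) simp
    then have "?e \<in> E"
      by (intro E_max[OF _ ne a F.inf_le2]) simp_all
    then have "meet ?f ?e = 0"
      by (rule f_disj)
    then show False
      using ne by simp
  qed
  have "meet (meet ?f r) (F.pprt (a - s + r)) = 0" if "a \<in> A" for a
    by (rule disjoint_mono[OF _ _ F.inf_le1 f_q[OF that]]) (simp_all add: r)
  then have "meet (F.pprt (a - s + r)) (meet ?f r) = 0" if "a \<in> A" for a
    using that by (metis F.inf_commute)
  from eq_0_if_disjoint_from_pprts[OF s _ F.inf_le2 this] show ?thesis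
    using r by simp
qed

lemma eq_0_if_disjoint_from_fraction:
  assumes f: "0 \<preceq> f" "f \<preceq> u" and c: "0 < c" "c \<le> 1" and disj: "meet f (c *\<^sub>R u) = 0"
  shows "f = 0"
proof -
  have "c *\<^sub>R f \<preceq> f"
    using F.scaleR_right_mono[OF c(2) f(1)] by simp
  moreover have "c *\<^sub>R f \<preceq> c *\<^sub>R u"
    using F.scaleR_left_mono[OF f(2)] c(1) by simp
  ultimately have "c *\<^sub>R f \<preceq> 0"
    using disj F.le_inf_iff by metis
  then have "(1 / c) *\<^sub>R (c *\<^sub>R f) \<preceq> 0"
    using F.scaleR_left_mono[of "c *\<^sub>R f" 0 "1 / c"] c(1) by simp
  then show ?thesis
    using c(1) f(1) by (simp add: F.order_antisym)
qed

lemma fsup_gap_le: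
  assumes s: "is_fsup \<mu> A s" and a0: "a0 \<in> A" "a0 \<preceq> w" and c: "0 < c" "c \<le> 1"
    and r: "r = c *\<^sub>R (s - a0)"
    and E_nonneg: "\<And>e. e \<in> E \<Longrightarrow> 0 \<preceq> e"
    and E_max: "\<And>x a. 0 \<preceq> x \<Longrightarrow> x \<noteq> 0 \<Longrightarrow> a \<in> A \<Longrightarrow> x \<preceq> F.pprt (a - s + r)
      \<Longrightarrow> (\<And>e. e \<in> E \<Longrightarrow> meet x e = 0) \<Longrightarrow> x \<in> E"
    and E_below: "\<And>e. e \<in> E \<Longrightarrow> \<exists>a. a \<preceq> w \<and> e \<preceq> F.pprt (a - s + r)"
  shows "s - w \<preceq> r"
proof -
  have u: "0 \<preceq> s - a0"
    using is_fsup_upper[OF s a0(1)] by simp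
  then have r_nonneg: "0 \<preceq> r"
    unfolding r using scaleR_nonneg c(1) by simp
  have "meet (F.pprt (s - w - r)) r = 0"
    by (rule maximal_disjoint_gap[OF s r_nonneg E_nonneg E_max E_below])
  moreover have "F.pprt (s - w - r) \<preceq> s - a0"
  proof -
    have "s - w - r \<preceq> s - w"
      using F.diff_left_mono[OF r_nonneg, of "s - w"] by simp
    also have "\<dots> \<preceq> s - a0"
      by (rule F.diff_left_mono[OF a0(2)])
    finally show ?thesis
      using u unfolding F.pprt_def by simp
  qed
  ultimately have "F.pprt (s - w - r) = 0"
    using eq_0_if_disjoint_from_fraction[OF F.zero_le_pprt _ c] unfolding r by blast
  then have "s - w - r \<preceq> 0"
    using F.le_zero_iff_zero_pprt by blast
  then show ?thesis
    by simp
qed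

lemma fsup_approx_countable:
  assumes countable_disj: "\<And>E. (\<And>e. e \<in> E \<Longrightarrow> 0 \<preceq> e \<and> e \<noteq> 0 \<and> e \<preceq> s - a0)
      \<Longrightarrow> pairwise (\<lambda>e e'. meet e e' = 0) E \<Longrightarrow> countable E"
    and s: "is_fsup \<mu> A s" and a0: "a0 \<in> A" and c: "0 < c" "c \<le> 1"
  obtains C where "C \<subseteq> A" "countable C"
    "\<And>w. a0 \<preceq> w \<Longrightarrow> (\<And>a. a \<in> C \<Longrightarrow> a \<preceq> w) \<Longrightarrow> s - w \<preceq> c *\<^sub>R (s - a0)"
proof -
  define r where "r = c *\<^sub>R (s - a0)"
  have u: "0 \<preceq> s - a0"
    using is_fsup_upper[OF s a0] by simp
  have r: "0 \<preceq> r" "r \<preceq> s - a0"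
    unfolding r_def using scaleR_nonneg[OF _ u] F.scaleR_right_mono[OF c(2) u] c(1) by simp_all
  define P where "P = {x. 0 \<preceq> x \<and> x \<noteq> 0 \<and> (\<exists>a\<in>A. x \<preceq> F.pprt (a - s + r))}"
  have "symp (\<lambda>e e'. meet e e' = 0)"
    by (simp add: symp_def F.inf_commute)
  then obtain E where E: "E \<subseteq> P" "pairwise (\<lambda>e e'. meet e e' = 0) E"
    and E_max: "\<And>x. x \<in> P \<Longrightarrow> (\<And>e. e \<in> E \<Longrightarrow> meet x e = 0) \<Longrightarrow> x \<in> E"
    by (rule maximal_pairwise_subset[where P = P]) blast
  have "\<forall>e\<in>E. \<exists>a\<in>A. e \<preceq> F.pprt (a - s + r)"
    using E(1) unfolding P_def by blast
  then obtain sel where sel: "\<And>e. e \<in> E \<Longrightarrow> sel e \<in> A \<and> e \<preceq> F.pprt (sel e - s + r)"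
    by metis
  show thesis
  proof (rule that[of "sel ` E"])
    show "sel ` E \<subseteq> A"
      using sel by blast
    have "0 \<preceq> e \<and> e \<noteq> 0 \<and> e \<preceq> s - a0" if "e \<in> E" for e
    proof -
      have "e \<preceq> r"
        using sel[OF that] pprt_shift_le[OF s _ r(1)] F.order_trans by blast
      then show ?thesis
        using E(1) that r(2) F.order_trans unfolding P_def by blast
    qed
    then show "countable (sel ` E)"
      using countable_disj[OF _ E(2)] by blast
    show "s - w \<preceq> c *\<^sub>R (s - a0)"
      if a0w: "a0 \<preceq> w" and below: "\<And>a. a \<in> sel ` E \<Longrightarrow> a \<preceq> w" for w
      unfolding r_def[symmetric]
    proof (rule fsup_gap_le[OF s a0 a0w c r_def])
      show "0 \<preceq> e" if "e \<in> E" for e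
        using E(1) that unfolding P_def by blast
      show "x \<in> E" if "0 \<preceq> x" "x \<noteq> 0" "a \<in> A" "x \<preceq> F.pprt (a - s + r)"
        and "\<And>e. e \<in> E \<Longrightarrow> meet x e = 0" for x a
        using that by (intro E_max) (auto simp: P_def)
      show "\<exists>a. a \<preceq> w \<and> e \<preceq> F.pprt (a - s + r)" if "e \<in> E" for e
        using below sel that by blast
    qed
  qed
qed

end

locale fuzzy_archimedean_riesz = fuzzy_riesz +
  assumes archimedean: "fuzzy_archimedean \<mu>"
begin

lemma eq_0_if_multiples_bounded:
  assumes g: "0 \<preceq> g" and bounded: "\<And>n::nat. real n *\<^sub>R g \<preceq> u"
  shows "g = 0"
proof (rule ccontr)
  assume "g \<noteq> 0"
  moreover have "fub \<mu> {c *\<^sub>R g | c. c > 0} u"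
    unfolding fub_def
  proof safe
    fix c :: real
    have "c *\<^sub>R g \<preceq> real (nat \<lceil>c\<rceil>) *\<^sub>R g"
      by (rule F.scaleR_right_mono[OF _ g]) linarith
    then show "c *\<^sub>R g \<preceq> u"
      by (rule F.order_trans[OF _ bounded])
  qed
  ultimately show False
    using archimedean g unfolding fuzzy_archimedean_def by blast
qed

lemma disjoint_if_multiples_below:
  assumes x: "0 \<preceq> x" and z: "0 \<preceq> z" and u: "0 \<preceq> u"
    and below: "\<And>n::nat. meet (real n *\<^sub>R x) u \<preceq> u - z"
  shows "meet x z = 0"
proof (rule eq_0_if_multiples_bounded)
  let ?g = "meet x z"
  show "0 \<preceq> ?g"
    using x z by simp
  show "real n *\<^sub>R ?g \<preceq> u" for n
  proof (induction n)
    case (Suc n)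
    have "real n *\<^sub>R ?g \<preceq> meet (real n *\<^sub>R x) u"
      using Suc.IH F.scaleR_left_mono[OF F.inf_le1, of "real n" x z] by simp
    also have "\<dots> \<preceq> u - z"
      by (rule below)
    also have "\<dots> \<preceq> u - ?g"
      by (rule F.diff_left_mono[OF F.inf_le2])
    finally have "real n *\<^sub>R ?g + ?g \<preceq> u"
      by (simp only: F.le_diff_eq)
    moreover have "real (Suc n) *\<^sub>R ?g = real n *\<^sub>R ?g + ?g"
      by (simp add: algebra_simps)
    ultimately show ?case
      by (simp only:)
  qed (simp add: u)
qed

lemma is_fsup_ideal_interval:
  assumes I: "fuzzy_ideal \<mu> I" and u: "0 \<preceq> u"
    and no_disjoint: "\<And>z. 0 \<preceq> z \<Longrightarrow> z \<preceq> u \<Longrightarrow> (\<And>x. x \<in> I \<Longrightarrow> 0 \<preceq> x \<Longrightarrow> meet x z = 0) \<Longrightarrow> z = 0"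
  shows "is_fsup \<mu> {x \<in> I. 0 \<preceq> x \<and> x \<preceq> u} u"
proof (rule is_fsupI)
  show "x \<preceq> u" if "x \<in> {x \<in> I. 0 \<preceq> x \<and> x \<preceq> u}" for x
    using that by blast
  fix w
  assume w: "\<And>x. x \<in> {x \<in> I. 0 \<preceq> x \<and> x \<preceq> u} \<Longrightarrow> x \<preceq> w"
  have sub: "subspace I"
    using I by (rule fuzzy_ideal_subspace)
  define z where "z = u - meet w u"
  have "0 \<preceq> w"
    using w subspace_0[OF sub] u by auto
  then have z: "0 \<preceq> z" "z \<preceq> u"
    unfolding z_def using u F.diff_left_mono[of 0 "meet w u" u] by simp_all
  have "meet x z = 0" if x: "x \<in> I" "0 \<preceq> x" for x
  proof (rule disjoint_if_multiples_below[OF x(2) z(1) u])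
    fix n :: nat
    let ?y = "meet (real n *\<^sub>R x) u"
    have nx: "0 \<preceq> real n *\<^sub>R x" "real n *\<^sub>R x \<in> I"
      using scaleR_nonneg[OF _ x(2)] subspace_scale[OF sub x(1)] by simp_all
    then have "fabs \<mu> ?y \<preceq> fabs \<mu> (real n *\<^sub>R x)"
      using u by (simp add: F.abs_of_nonneg)
    then have "?y \<in> I"
      by (rule fuzzy_ideal_solid[OF I nx(2)])
    then have "?y \<preceq> w"
      using nx(1) u by (intro w) simp
    then show "?y \<preceq> u - z"
      unfolding z_def by simp
  qed
  then have "z = 0"
    using no_disjoint z by blast
  then show "u \<preceq> w"
    unfolding z_def by (simp add: F.inf.absorb_iff2)
qed

lemma countable_disjoint_if_bands:
  assumes bands: "\<And>A. fuzzy_sigma_ideal \<mu> A \<Longrightarrow> fuzzy_band \<mu> A"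
    and u: "0 \<preceq> u" and E: "\<And>e. e \<in> E \<Longrightarrow> 0 \<preceq> e \<and> e \<noteq> 0 \<and> e \<preceq> u"
    and disj: "pairwise (\<lambda>e e'. meet e e' = 0) E"
  shows "countable E"
proof -
  let ?I = "meets_countably E"
  have E_nonneg: "0 \<preceq> e" if "e \<in> E" for e
    using E[OF that] by blast
  have I: "fuzzy_sigma_ideal \<mu> ?I"
    by (rule fuzzy_sigma_ideal_meets_countably[OF E_nonneg])
  have E_I: "e \<in> ?I" if "e \<in> E" for e
    by (rule pairwise_disjoint_meets_countably[OF disj that E_nonneg[OF that]])
  have "is_fsup \<mu> {x \<in> ?I. 0 \<preceq> x \<and> x \<preceq> u} u"
  proof (rule is_fsup_ideal_interval[OF _ u])
    show "fuzzy_ideal \<mu> ?I"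
      using I unfolding fuzzy_sigma_ideal_def by blast
    fix z
    assume z: "0 \<preceq> z" and disj_I: "\<And>x. x \<in> ?I \<Longrightarrow> 0 \<preceq> x \<Longrightarrow> meet x z = 0"
    have "meet z e = 0" if "e \<in> E" for e
      using disj_I[OF E_I[OF that] E_nonneg[OF that]] by (simp add: F.inf_commute)
    then have "{e \<in> E. meet (fabs \<mu> z) e \<noteq> 0} = {}"
      unfolding F.abs_of_nonneg[OF z] by blast
    then have "z \<in> ?I"
      unfolding meets_countably_def by (simp only: mem_Collect_eq countable_empty)
    then show "z = 0"
      using disj_I[OF _ z] by simp
  qed
  then have "u \<in> ?I"
    by (rule fuzzy_bandD[OF bands[OF I], rotated]) blast
  moreover have "meet (fabs \<mu> u) e \<noteq> 0" if "e \<in> E" for e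
    using E[OF that] by (simp add: F.abs_of_nonneg[OF u] F.inf_absorb2)
  then have "{e \<in> E. meet (fabs \<mu> u) e \<noteq> 0} = E"
    by blast
  ultimately show ?thesis
    unfolding meets_countably_def by simp
qed

lemma is_fsup_if_gaps_vanish:
  assumes s: "is_fsup \<mu> A s" and B: "B \<subseteq> A" "a0 \<in> B"
    and gap: "\<And>n w. a0 \<preceq> w \<Longrightarrow> (\<And>b. b \<in> B \<Longrightarrow> b \<preceq> w)
      \<Longrightarrow> s - w \<preceq> (1 / real (Suc n)) *\<^sub>R (s - a0)"
  shows "is_fsup \<mu> B s"
proof (rule is_fsupI)
  show "b \<preceq> s" if "b \<in> B" for b
    by (rule is_fsup_upper[OF s subsetD[OF B(1) that]])
  fix w
  assume w: "\<And>b. b \<in> B \<Longrightarrow> b \<preceq> w"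
  let ?w = "meet w s"
  have below: "b \<preceq> ?w" if "b \<in> B" for b
    by (rule F.le_infI[OF w[OF that] is_fsup_upper[OF s subsetD[OF B(1) that]]])
  have "real n *\<^sub>R (s - ?w) \<preceq> s - a0" for n
  proof (cases n)
    case 0
    then show ?thesis
      using below[OF B(2)] by simp
  next
    case (Suc m)
    have "s - ?w \<preceq> (1 / real (Suc m)) *\<^sub>R (s - a0)"
      by (rule gap[OF below[OF B(2)] below])
    from F.scaleR_left_mono[OF this, of "real (Suc m)"] show ?thesis
      using Suc by simp
  qed
  then have "s - ?w = 0"
    by (rule eq_0_if_multiples_bounded[rotated]) simp
  then show "s \<preceq> w"
    by (metis F.inf.cobounded1 eq_iff_diff_eq_0)
qed

theorem countable_sup_if_disjoint_countable:
  assumes countable_disj: "\<And>u E. 0 \<preceq> u \<Longrightarrow> (\<And>e. e \<in> E \<Longrightarrow> 0 \<preceq> e \<and> e \<noteq> 0 \<and> e \<preceq> u)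
      \<Longrightarrow> pairwise (\<lambda>e e'. meet e e' = 0) E \<Longrightarrow> countable E"
  shows "fuzzy_countable_sup \<mu>"
  unfolding fuzzy_countable_sup_def
proof (intro allI impI)
  fix A s
  assume s: "is_fsup \<mu> A s"
  show "\<exists>B\<subseteq>A. countable B \<and> is_fsup \<mu> B s"
  proof (cases "A = {}")
    case True
    with s show ?thesis
      by blast
  next
    case False
    then obtain a0 where a0: "a0 \<in> A"
      by blast
    have u: "0 \<preceq> s - a0"
      using is_fsup_upper[OF s a0] by simp
    have "\<exists>C. C \<subseteq> A \<and> countable C \<and>
      (\<forall>w. a0 \<preceq> w \<longrightarrow> (\<forall>a\<in>C. a \<preceq> w) \<longrightarrow> s - w \<preceq> (1 / real (Suc n)) *\<^sub>R (s - a0))" for n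
      by (rule fsup_approx_countable[OF countable_disj[OF u] s a0, of "1 / real (Suc n)"]) auto
    then obtain C where C: "\<And>n. C n \<subseteq> A" "\<And>n. countable (C n)"
      and C_approx: "\<And>n w. a0 \<preceq> w \<Longrightarrow> (\<And>a. a \<in> C n \<Longrightarrow> a \<preceq> w)
        \<Longrightarrow> s - w \<preceq> (1 / real (Suc n)) *\<^sub>R (s - a0)"
      by metis
    let ?B = "insert a0 (\<Union>n. C n)"
    have "?B \<subseteq> A" "countable ?B"
      using a0 C by auto
    moreover have "is_fsup \<mu> ?B s"
    proof (rule is_fsup_if_gaps_vanish[OF s \<open>?B \<subseteq> A\<close>])
      show "s - w \<preceq> (1 / real (Suc n)) *\<^sub>R (s - a0)"
        if "a0 \<preceq> w" "\<And>b. b \<in> ?B \<Longrightarrow> b \<preceq> w" for n w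
        using that(2) by (intro C_approx[OF that(1)]) blast
    qed simp
    ultimately show ?thesis
      by blast
  qed
qed

end

theorem theorem4p10:
  fixes \<mu> :: "'a::real_vector \<Rightarrow> 'a \<Rightarrow> real"
  assumes "fuzzy_riesz_space \<mu>" and "fuzzy_archimedean \<mu>"
  shows "fuzzy_countable_sup \<mu> \<longleftrightarrow> (\<forall>A. fuzzy_sigma_ideal \<mu> A \<longrightarrow> fuzzy_band \<mu> A)"
proof -
  interpret fuzzy_archimedean_riesz \<mu>
    using assms by unfold_locales
  show ?thesis
  proof
    show "\<forall>A. fuzzy_sigma_ideal \<mu> A \<longrightarrow> fuzzy_band \<mu> A" if "fuzzy_countable_sup \<mu>"
      using fuzzy_band_if_countable_sup[OF that] by blast
    show "fuzzy_countable_sup \<mu>" if "\<forall>A. fuzzy_sigma_ideal \<mu> A \<longrightarrow> fuzzy_band \<mu> A"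
      using that by (intro countable_sup_if_disjoint_countable countable_disjoint_if_bands) auto
  qed
qed

end
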